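(* Let $(\mathscr T_t)_{t\ge0}$ be a Crump-Mode-Jagers process with generic waiting-time sequence $(X_j)_{j\in\mathbb N}$ as in the context, let $(X'_j)_{j\in\mathbb N}$ be an independent copy of it, and assume Assumption (A). Suppose that for some $\alpha>0$ and $K\in\mathbb N$, \[\sum_{j=1}^\infty\mathbb E\Big[e^{-\alpha\sum_{i=1}^jX_i}\Big]<1\quad\text{and}\quad\prod_{i=K+1}^\infty\mathbb E\Big[e^{\alpha(X'_i-X_i)}\Big]<\infty.\] Then the set $\mathcal P=\{u\in\mathcal U:\ u\text{ catches up to each of its ancestors}\}$ is almost surely finite.
   Context: Ulam–Harris tree: $\mathcal U=\bigcup_{n\ge0}\mathbb N^n$ with $\mathbb N^0=\{\varnothing\}$; $u=u_1\cdots u_k$, $|u|=k$, $uj$ is the $j$-th child of $u$, and concatenation $uv$ of $u$ and $v=v_1\cdots v_m$ is $u_1\cdots u_kv_1\cdots v_m$. The ancestors of $w=w_1\cdots w_k$ are $w_1\cdots w_\ell$ for $0\le\ell<k$ (with $\ell=0$ giving $\varnothing$). Let $(X_j)_{j\in\mathbb N}$ be $[0,\infty]$-valued random variables and for each $u\in\mathcal U$ let $(X(uj))_{j\in\mathbb N}$ be a copy of $(X_j)_j$, independent over different $u$. Birth times: $\mathcal B(\varnothing)=0$, $\mathcal B(ui)=\mathcal B(u)+\sum_{j=1}^iX(uj)$. For $u\in\mathcal U$ and $v=v_1\cdots v_m\in\mathcal U$ with $m\ge1$, say "$uv$ catches up to $u$" if there exists $j\in\mathbb N$ with $\mathcal B(uv(v_1+j))\le\mathcal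 B(u(v_1+j))$; a node $w$ catches up to its ancestor $a$ if, writing $w=av$, $w$ catches up to $a$ in this sense. Assumption (A): (i) $(X_i)_{i\in\mathbb N}$ mutually independent; (ii) $X_j<\infty$ a.s. for each $j$; (iii) $\sum_{j=1}^\infty\prod_{i=1}^j\mathbb P(X_i=0)<1$. *)

theory Defs
  imports "HOL-Probability.Probability"
begin

text \<open>Ulam-Harris nodes are lists of positive naturals; children are numbered 1,2,3,...\<close>
definition UH :: "nat list set" where
  "UH = {u. \<forall>x\<in>set u. 1 \<le> x}"

text \<open>Birth time of node w in the outcome \<omega>; X u \<omega> is the waiting time attached to node u
  (so X (u @ [j]) is the j-th waiting time of the children of u).
  B([]) = 0 and B(u@[i]) = B(u) + sum_{j=1..i} X(u@[j]).\<close>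
definition birth :: "(nat list \<Rightarrow> 'a \<Rightarrow> ennreal) \<Rightarrow> nat list \<Rightarrow> 'a \<Rightarrow> ennreal" where
  "birth X w \<omega> = (\<Sum>l<length w. \<Sum>j\<in>{1..w ! l}. X (take l w @ [j]) \<omega>)"

definition catches_up :: "(nat list \<Rightarrow> 'a \<Rightarrow> ennreal) \<Rightarrow> nat list \<Rightarrow> nat list \<Rightarrow> 'a \<Rightarrow> bool" where
  "catches_up X u v \<omega> \<longleftrightarrow> v \<noteq> [] \<and>
     (\<exists>j\<ge>1. birth X (u @ v @ [hd v + j]) \<omega> \<le> birth X (u @ [hd v + j]) \<omega>)"

definition catchP :: "(nat list \<Rightarrow> 'a \<Rightarrow> ennreal) \<Rightarrow> 'a \<Rightarrow> nat list set" where
  "catchP X \<omega> = {w \<in> UH. \<forall>l<length w. catches_up X (take l w) (drop l w) \<omega>}"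

definition eexp :: "ereal \<Rightarrow> ennreal" where
  "eexp x = (if x = \<infinity> then \<infinity> else if x = -\<infinity> then 0 else ennreal (exp (real_of_ereal x)))"

end

(*
  Only catching up with the root matters.  For a node w with first letter i, catching up with the
  root means that for some j >= 1 the gap walk
    B(w (i+j)) - B(i+j) = lag w + sum_{i < m <= i+j} (X(w m) - X_m)
  drops to or below 0, where lag w >= 0 depends on waiting times other than the increments.  Since
  exp(alpha (B(i+n) - B(w (i+n)))) / prod_m E exp(alpha (X'_m - X_m)) is a martingale along the walk,
  optional stopping bounds the probability of such a crossing.  Starting the walk at max i K and
  weighting with exp(-alpha (X_1 + ... + X_K)) removes the first K factors of the product, so that
    E[exp(-alpha (X_1 + ... + X_K)); w catches up with the root] <= L * prod_l psi(w_l),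
  with L the finite product over i > K and psi(c) = E exp(-alpha (X_1 + ... + X_c)).  Summed over all
  nodes the right-hand side is a geometric series in sum_c psi(c) < 1.  Hence the weighted number of
  nodes catching up with the root has finite expectation and is almost surely finite.
*)
theory Submission
  imports Defs
begin

lemma (in prob_space) indep_sets_reindex:
  assumes f: "inj_on f I" and F: "indep_sets F (f ` I)"
  shows "indep_sets (\<lambda>i. F (f i)) I"
proof (rule indep_setsI)
  fix i assume "i \<in> I"
  then show "F (f i) \<subseteq> events" using F by (auto simp: indep_sets_def)
next
  fix A J assume J: "J \<noteq> {}" "J \<subseteq> I" "finite J" and A: "\<forall>j\<in>J. A j \<in> F (f j)"
  have inv: "the_inv_into I f (f j) = j" if "j \<in> J" for j
    using the_inv_into_f_f[OF f] that J(2) by blast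
  have "prob (\<Inter>j\<in>f ` J. A (the_inv_into I f j)) = (\<Prod>j\<in>f ` J. prob (A (the_inv_into I f j)))"
    using J A inv by (intro indep_setsD[OF F]) auto
  then show "prob (\<Inter>j\<in>J. A j) = (\<Prod>j\<in>J. prob (A j))"
    using inv by (simp add: prod.reindex[OF inj_on_subset[OF f J(2)]])
qed

lemma (in prob_space) indep_vars_reindex:
  assumes f: "inj_on f I" "f ` I \<subseteq> K" and X: "indep_vars M' X K"
  shows "indep_vars (\<lambda>i. M' (f i)) (\<lambda>i. X (f i)) I"
  using X f indep_sets_reindex[OF f(1), of "\<lambda>k. {X k -` A \<inter> space M |A. A \<in> sets (M' k)}"]
    indep_sets_mono_index[of "f ` I" K]
  unfolding indep_vars_def2 by auto

lemma sets_PiM_cylinder: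
  assumes "finite F" "\<And>k. k \<in> F \<Longrightarrow> B k \<in> sets N"
  shows "{f \<in> space (PiM UNIV (\<lambda>_::'j. N)). \<forall>k\<in>F. f (c k) \<in> B k} \<in> sets (PiM UNIV (\<lambda>_. N))"
proof (cases "F = {}")
  case False
  have "{f \<in> space (PiM UNIV (\<lambda>_::'j. N)). f (c k) \<in> B k} \<in> sets (PiM UNIV (\<lambda>_. N))" if "k \<in> F" for k
    using measurable_sets[OF measurable_component_singleton[of "c k" UNIV], of "B k" "\<lambda>_. N"] assms(2)[OF that]
    by (simp add: Int_def conj_commute)
  with assms(1) False show ?thesis
    by (intro sets.sets_Collect_finite_All') auto
qed simp

lemma (in prob_space) indep_vars_blocks:
  fixes Z :: "'i \<Rightarrow> 'j \<Rightarrow> 'a \<Rightarrow> 'b" and p :: "'k \<Rightarrow> 'i" and c :: "'k \<Rightarrow> 'j"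
  assumes blocks: "indep_vars (\<lambda>_. PiM UNIV (\<lambda>_. N)) (\<lambda>i \<omega> j. Z i j \<omega>) I"
    and within: "\<And>i. i \<in> I \<Longrightarrow> indep_vars (\<lambda>_. N) (Z i) UNIV"
    and inj: "inj_on (\<lambda>k. (p k, c k)) K" and p: "p ` K \<subseteq> I"
  shows "indep_vars (\<lambda>_. N) (\<lambda>k. Z (p k) (c k)) K"
proof -
  let ?vec = "\<lambda>i \<omega> j. Z i j \<omega>" and ?S = "PiM UNIV (\<lambda>_::'j. N)"
  have vec_meas: "?vec i \<in> measurable M ?S" if "i \<in> I" for i
    using blocks that unfolding indep_vars_def2 by auto
  have Z_meas: "Z i j \<in> measurable M N" if "i \<in> I" for i j
    using measurable_compose[OF vec_meas[OF that] measurable_component_singleton[of j UNIV]] by simp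
  show ?thesis
    unfolding indep_vars_def2
  proof (intro conjI ballI indep_setsI)
    fix k assume "k \<in> K"
    then show "random_variable N (Z (p k) (c k))" using Z_meas p by blast
    then show "{Z (p k) (c k) -` A \<inter> space M |A. A \<in> sets N} \<subseteq> events"
      by (auto intro: measurable_sets)
  next
    fix E F assume F: "F \<noteq> {}" "F \<subseteq> K" "finite F"
      and E: "\<forall>k\<in>F. E k \<in> {Z (p k) (c k) -` A \<inter> space M |A. A \<in> sets N}"
    then have "\<forall>k\<in>F. \<exists>A. E k = Z (p k) (c k) -` A \<inter> space M \<and> A \<in> sets N"
      by blast
    then obtain B where B: "\<And>k. k \<in> F \<Longrightarrow> E k = Z (p k) (c k) -` B k \<inter> space M \<and> B k \<in> sets N"
      by (metis bchoice)
    define F_at where "F_at i = {k \<in> F. p k = i}" for i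
    define C where "C i = {f \<in> space ?S. \<forall>k\<in>F_at i. f (c k) \<in> B k}" for i
    have pF: "p ` F \<subseteq> I" "finite (p ` F)" "p ` F \<noteq> {}" using F p by auto
    have F_at_sub: "F_at i \<subseteq> F" for i
      by (auto simp: F_at_def)
    have inj_c: "inj_on c (F_at i)" for i
      using inj F(2) unfolding F_at_def inj_on_def by blast
    have block_prob: "prob (?vec i -` C i \<inter> space M) = (\<Prod>k\<in>F_at i. prob (E k))"
      if i: "i \<in> p ` F" for i
    proof -
      have ne: "F_at i \<noteq> {}" and fin: "finite (F_at i)"
        using i F by (auto simp: F_at_def)
      have set_eq: "?vec i -` C i \<inter> space M = (\<Inter>k\<in>F_at i. Z i (c k) -` B k \<inter> space M)"
        using measurable_space[OF vec_meas] pF(1) i ne by (auto simp: C_def)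
      have indep: "indep_vars (\<lambda>_. N) (\<lambda>k. Z i (c k)) (F_at i)"
        using indep_vars_reindex[OF inj_c[of i] _ within[of i]] pF(1) i by auto
      have "prob (\<Inter>k\<in>F_at i. Z i (c k) -` B k \<inter> space M) = (\<Prod>k\<in>F_at i. prob (Z i (c k) -` B k \<inter> space M))"
        using ne fin B F_at_sub[of i] by (intro indep_varsD[OF indep]) auto
      also have "\<dots> = (\<Prod>k\<in>F_at i. prob (E k))"
        using B by (intro prod.cong) (auto simp: F_at_def)
      finally show ?thesis
        unfolding set_eq .
    qed
    have C_sets: "C i \<in> sets ?S" for i
      unfolding C_def using B F(3) by (intro sets_PiM_cylinder) (auto simp: F_at_def)
    have "(\<Inter>k\<in>F. E k) = (\<Inter>i\<in>p ` F. ?vec i -` C i \<inter> space M)"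
      using measurable_space[OF vec_meas] pF(1) B F(1) by (auto simp: C_def F_at_def)
    then have "prob (\<Inter>k\<in>F. E k) = (\<Prod>i\<in>p ` F. prob (?vec i -` C i \<inter> space M))"
      using indep_varsD[OF blocks pF(3,2,1)] C_sets by simp
    also have "\<dots> = (\<Prod>i\<in>p ` F. \<Prod>k\<in>F_at i. prob (E k))"
      by (simp add: block_prob)
    also have "\<dots> = (\<Prod>k\<in>F. prob (E k))"
      unfolding F_at_def using prod.group[OF F(3) pF(2), of p "\<lambda>k. prob (E k)"] by simp
    finally show "prob (\<Inter>k\<in>F. E k) = (\<Prod>k\<in>F. prob (E k))" .
  qed
qed

lemma (in prob_space) indep_var_nn_integral:
  fixes X1 X2 :: "'a \<Rightarrow> ennreal"
  assumes "indep_var borel X1 borel X2"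
  shows "(\<integral>\<^sup>+\<omega>. X1 \<omega> * X2 \<omega> \<partial>M) = (\<integral>\<^sup>+\<omega>. X1 \<omega> \<partial>M) * (\<integral>\<^sup>+\<omega>. X2 \<omega> \<partial>M)"
proof -
  have borel: "(\<lambda>_. borel) = case_bool borel borel"
    by (auto split: bool.split)
  have "indep_vars (\<lambda>_. borel) (case_bool X1 X2) UNIV"
    using assms unfolding indep_var_def borel .
  then show ?thesis
    using indep_vars_nn_integral[of UNIV "case_bool X1 X2"] by (simp add: UNIV_bool mult.commute)
qed

lemma AE_finite_if_weighted_count_finite:
  fixes A :: "'i \<Rightarrow> 'a \<Rightarrow> bool" and e :: "'a \<Rightarrow> ennreal"
  assumes I: "countable I"
    and A: "\<And>i. i \<in> I \<Longrightarrow> Measurable.pred M (A i)"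
    and e: "e \<in> borel_measurable M" "\<And>\<omega>. e \<omega> \<noteq> 0"
    and fin: "(\<integral>\<^sup>+i. \<integral>\<^sup>+\<omega>. e \<omega> * of_bool (A i \<omega>) \<partial>M \<partial>count_space I) < \<infinity>"
  shows "AE \<omega> in M. finite {i \<in> I. A i \<omega>}"
proof (cases "finite I")
  case False
  define en where "en = from_nat_into I"
  have bij: "bij_betw en UNIV I"
    unfolding en_def using bij_betw_from_nat_into[OF I False] .
  have [measurable]: "Measurable.pred M (A (en n))" for n
    using A bij_betw_apply[OF bij] by blast
  note [measurable] = e(1)
  have count_eq: "(\<integral>\<^sup>+i. f i \<partial>count_space I) = (\<Sum>n. f (en n))" for f :: "'i \<Rightarrow> ennreal"
    by (simp add: nn_integral_bij_count_space[OF bij, symmetric] nn_integral_count_space_nat)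
  define H where "H \<omega> = (\<Sum>n. e \<omega> * of_bool (A (en n) \<omega>))" for \<omega>
  have "(\<integral>\<^sup>+\<omega>. H \<omega> \<partial>M) = (\<integral>\<^sup>+i. \<integral>\<^sup>+\<omega>. e \<omega> * of_bool (A i \<omega>) \<partial>M \<partial>count_space I)"
    unfolding H_def count_eq by (rule nn_integral_suminf) measurable
  then have "AE \<omega> in M. H \<omega> \<noteq> \<infinity>"
    using fin by (intro nn_integral_PInf_AE) (auto simp: H_def)
  then show ?thesis
  proof eventually_elim
    fix \<omega> assume "H \<omega> \<noteq> \<infinity>"
    moreover have "H \<omega> = e \<omega> * (\<integral>\<^sup>+i. indicator {i \<in> I. A i \<omega>} i \<partial>count_space I)"
      using bij_betw_apply[OF bij]
      by (simp add: H_def ennreal_suminf_cmult count_eq indicator_def of_bool_def)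
    ultimately have "emeasure (count_space I) {i \<in> I. A i \<omega>} \<noteq> \<infinity>"
      using e(2) by (subst (asm) nn_integral_indicator) (auto simp: ennreal_mult_eq_top_iff)
    then show "finite {i \<in> I. A i \<omega>}"
      by (auto simp: emeasure_count_space split: if_splits)
  qed
qed simp

lemma exp_plus_exp_minus_ge_2: "2 \<le> exp x + exp (- x :: real)"
  using exp_ge_add_one_self[of x] exp_ge_add_one_self[of "- x"] by linarith

lemma ex_le_Suc_iff: "(\<exists>n\<le>Suc N. P n) \<longleftrightarrow> P 0 \<or> (\<exists>n\<le>N. P (Suc n))"
proof
  assume "\<exists>n\<le>Suc N. P n"
  then obtain n where "n \<le> Suc N" "P n" by blast
  then show "P 0 \<or> (\<exists>n\<le>N. P (Suc n))" by (cases n) auto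
qed (metis Suc_le_mono zero_le)

lemma greaterThanAtMost_Suc_insert: "{n0<..n0 + Suc n} = insert (Suc n0) {Suc n0<..Suc n0 + n}"
  by auto

lemma sum_atLeastAtMost_split_greaterThanAtMost:
  fixes f :: "nat \<Rightarrow> 'a::comm_monoid_add"
  shows "(\<Sum>m\<in>{1..i + j}. f m) = (\<Sum>m\<in>{1..i}. f m) + (\<Sum>m\<in>{i<..i + j}. f m)"
proof -
  have "{1..i + j} = {1..i} \<union> {i<..i + j}"
    by auto
  then show ?thesis
    by (simp add: sum.union_disjoint ivl_disj_int)
qed

lemma suminf_power_Suc_less_top:
  fixes \<mu> :: ennreal
  assumes "\<mu> < 1"
  shows "(\<Sum>n. \<mu> ^ Suc n) < \<infinity>"
proof -
  obtain r where r: "0 \<le> r" "r < 1" "\<mu> = ennreal r"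
    using assms by (cases \<mu>) auto
  have "(\<Sum>n. \<mu> ^ Suc n) = (\<Sum>n. ennreal (r ^ Suc n))"
    by (simp only: r(3) ennreal_power[OF r(1)])
  also have "\<dots> = ennreal (\<Sum>n. r ^ Suc n)"
    using r by (intro suminf_ennreal2) (auto simp: summable_geometric_iff)
  finally show ?thesis
    by simp
qed

lemma eexp_ereal [simp]: "eexp (ereal r) = ennreal (exp r)"
  by (simp add: eexp_def)

lemma eexp_measurable [measurable]: "eexp \<in> borel_measurable borel"
  unfolding eexp_def[abs_def] by measurable

lemma enn2ereal_ennreal_max: "enn2ereal (ennreal x) = ereal (max 0 x)"
  by (cases "0 \<le> x") (auto simp: ennreal_neg max_def zero_ennreal.rep_eq zero_ereal_def)

section \<open>The Ulam--Harris tree\<close>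

definition UH_nonroot :: "nat list set" where
  "UH_nonroot = UH - {[]}"

lemma singleton_in_UH_nonroot [simp]: "[m] \<in> UH_nonroot \<longleftrightarrow> 1 \<le> m"
  by (simp add: UH_nonroot_def UH_def)

lemma snoc_in_UH_nonroot: "u \<in> UH \<Longrightarrow> 1 \<le> m \<Longrightarrow> u @ [m] \<in> UH_nonroot"
  by (simp add: UH_nonroot_def UH_def)

lemma take_in_UH: "w \<in> UH \<Longrightarrow> take l w \<in> UH"
  unfolding UH_def by (auto dest: in_set_takeD)

lemma UH_nonroot_butlast:
  assumes "a \<in> UH_nonroot"
  shows "butlast a \<in> UH" and "butlast a @ [Suc (last a - 1)] = a"
proof -
  have a: "a \<noteq> []" "\<forall>x\<in>set a. 1 \<le> x"
    using assms by (auto simp: UH_nonroot_def UH_def)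
  then show "butlast a \<in> UH"
    by (auto simp: UH_def in_set_butlastD)
  have "Suc (last a - 1) = last a"
    using a last_in_set by fastforce
  then show "butlast a @ [Suc (last a - 1)] = a"
    using a(1) by simp
qed

lemma UH_nonrootE:
  assumes "a \<in> UH_nonroot"
  obtains u j where "u \<in> UH" "a = u @ [Suc j]"
  using UH_nonroot_butlast[OF assms] by metis

lemma last_in_UH_nonroot: "a \<in> UH_nonroot \<Longrightarrow> [last a] \<in> UH_nonroot"
  by (elim UH_nonrootE) simp

lemma countable_UH_nonroot: "countable UH_nonroot"
  by (rule countable_subset[OF subset_UNIV]) simp

lemma UH_level_Suc_bij:
  "bij_betw (\<lambda>(x, v). x # v) ({1..} \<times> {w \<in> UH. length w = n}) {w \<in> UH. length w = Suc n}"
proof (rule bij_betwI')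
  fix y assume "y \<in> {w \<in> UH. length w = Suc n}"
  then show "\<exists>x\<in>{1..} \<times> {w \<in> UH. length w = n}. y = (case x of (x, v) \<Rightarrow> x # v)"
    by (cases y) (auto simp: UH_def)
qed (auto simp: UH_def)

lemma nn_integral_count_space_Suc:
  fixes \<psi> :: "nat \<Rightarrow> ennreal"
  shows "(\<integral>\<^sup>+x. \<psi> x \<partial>count_space {1..}) = (\<Sum>j. \<psi> (Suc j))"
proof -
  have "bij_betw Suc UNIV {1::nat..}"
    by (rule bij_betwI[where g="\<lambda>y. y - 1"]) auto
  then have "(\<integral>\<^sup>+x. \<psi> x \<partial>count_space {1..}) = (\<integral>\<^sup>+j. \<psi> (Suc j) \<partial>count_space UNIV)"
    by (rule nn_integral_bij_count_space[symmetric])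
  then show ?thesis by (simp add: nn_integral_count_space_nat)
qed

lemma nn_integral_UH_level_prod:
  fixes \<psi> :: "nat \<Rightarrow> ennreal"
  shows "(\<integral>\<^sup>+w. (\<Prod>l<length w. \<psi> (w ! l)) \<partial>count_space {w \<in> UH. length w = n})
    = (\<Sum>j. \<psi> (Suc j)) ^ n"
proof (induction n)
  case 0
  have "{w \<in> UH. length w = 0} = {[]}" by (auto simp: UH_def)
  then show ?case by (simp add: nn_integral_count_space_finite)
next
  case (Suc n)
  let ?U = "{w \<in> UH. length w = n}"
  have cU: "countable ?U" by (rule countable_subset[OF subset_UNIV]) simp
  interpret U: sigma_finite_measure "count_space ?U"
    by (rule sigma_finite_measure_count_space_countable[OF cU])
  have "(\<integral>\<^sup>+w. (\<Prod>l<length w. \<psi> (w ! l)) \<partial>count_space {w \<in> UH. length w = Suc n})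
      = (\<integral>\<^sup>+p. \<psi> (fst p) * (\<Prod>l<length (snd p). \<psi> (snd p ! l)) \<partial>count_space ({1..} \<times> ?U))"
    by (subst nn_integral_bij_count_space[symmetric, OF UH_level_Suc_bij])
      (auto simp: case_prod_beta prod.lessThan_Suc_shift simp del: prod.lessThan_Suc intro!: nn_integral_cong)
  also have "\<dots> = (\<integral>\<^sup>+x. \<integral>\<^sup>+v. \<psi> x * (\<Prod>l<length v. \<psi> (v ! l)) \<partial>count_space ?U \<partial>count_space {1..})"
    using U.nn_integral_fst[of "\<lambda>p. \<psi> (fst p) * (\<Prod>l<length (snd p). \<psi> (snd p ! l))" "count_space {1..}"]
    by (simp add: pair_measure_countable[OF _ cU])
  also have "\<dots> = (\<integral>\<^sup>+x. \<psi> x * (\<Sum>j. \<psi> (Suc j)) ^ n \<partial>count_space {1..})"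
    by (simp add: nn_integral_cmult Suc.IH)
  also have "\<dots> = (\<Sum>j. \<psi> (Suc j)) ^ Suc n"
    by (simp add: nn_integral_multc nn_integral_count_space_Suc[simplified] mult.commute)
  finally show ?case .
qed

lemma nn_integral_UH_nonroot_prod_finite:
  fixes \<psi> :: "nat \<Rightarrow> ennreal"
  assumes \<mu>: "(\<Sum>j. \<psi> (Suc j)) < 1"
  shows "(\<integral>\<^sup>+w. (\<Prod>l<length w. \<psi> (w ! l)) \<partial>count_space UH_nonroot) < \<infinity>"
proof -
  let ?f = "\<lambda>w. \<Prod>l<length w. \<psi> (w ! l)" and ?\<mu> = "\<Sum>j. \<psi> (Suc j)"
  define level where "level n = {w \<in> UH. length w = Suc n}" for n
  have "disjoint_family level" by (auto simp: disjoint_family_on_def level_def)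
  moreover have "(\<Union>n. level n) = UH_nonroot"
    by (auto simp: level_def UH_nonroot_def) (metis length_Suc_conv neq_Nil_conv)
  ultimately have ind: "indicator UH_nonroot w = (\<Sum>n. indicator (level n) w :: ennreal)" for w
    by (simp add: suminf_indicator)
  have "(\<integral>\<^sup>+w. ?f w \<partial>count_space UH_nonroot) = (\<integral>\<^sup>+w. (\<Sum>n. ?f w * indicator (level n) w) \<partial>count_space UNIV)"
    by (simp add: nn_integral_count_space_indicator ind ennreal_suminf_cmult)
  also have "\<dots> = (\<Sum>n. \<integral>\<^sup>+w. ?f w \<partial>count_space (level n))"
    by (subst nn_integral_suminf) (simp_all add: nn_integral_count_space_indicator)
  also have "\<dots> = (\<Sum>n. ?\<mu> ^ Suc n)"
    by (simp only: level_def nn_integral_UH_level_prod)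
  also have "\<dots> < \<infinity>"
    using \<mu> by (rule suminf_power_Suc_less_top)
  finally show ?thesis .
qed

text \<open>For \<open>w\<close> with first letter \<open>i\<close>, \<open>lag w\<close> evaluated at the waiting times is \<open>B(w i) - B(i)\<close>,
  the head start of the root's children after \<open>i\<close> over the children of \<open>w\<close>
  (see \<open>birth_time_eq_lag\<close>).\<close>
definition lag :: "nat list \<Rightarrow> (nat list \<Rightarrow> real) \<Rightarrow> real" where
  "lag w x = (\<Sum>l\<in>{1..<length w}. \<Sum>j\<in>{1..w ! l}. x (take l w @ [j])) + (\<Sum>j\<in>{1..w ! 0}. x (w @ [j]))"

definition lag_nodes :: "nat list \<Rightarrow> nat list set" where
  "lag_nodes w = {take l w @ [j] | l j. 1 \<le> l \<and> l < length w \<and> 1 \<le> j \<and> j \<le> w ! l}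
    \<union> {w @ [j] | j. 1 \<le> j \<and> j \<le> w ! 0}"

lemma lag_nodes_intros:
  "1 \<le> l \<Longrightarrow> l < length w \<Longrightarrow> 1 \<le> j \<Longrightarrow> j \<le> w ! l \<Longrightarrow> take l w @ [j] \<in> lag_nodes w"
  "1 \<le> j \<Longrightarrow> j \<le> w ! 0 \<Longrightarrow> w @ [j] \<in> lag_nodes w"
  unfolding lag_nodes_def by blast+

lemma lag_eq_sum_levels:
  assumes "w \<noteq> []"
  shows "lag w x = (\<Sum>l\<in>{1..length w}. \<Sum>j\<in>{1..(if l = length w then w ! 0 else w ! l)}. x (take l w @ [j]))"
proof -
  have "{1..length w} = insert (length w) {1..<length w}"
    using assms by (auto simp: neq_Nil_conv)
  moreover have "(\<Sum>l\<in>{1..<length w}. \<Sum>j\<in>{1..(if l = length w then w ! 0 else w ! l)}. x (take l w @ [j]))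
      = (\<Sum>l\<in>{1..<length w}. \<Sum>j\<in>{1..w ! l}. x (take l w @ [j]))"
    by (intro sum.cong) auto
  ultimately show ?thesis
    unfolding lag_def by (simp add: add.commute)
qed

lemma lag_cong:
  assumes "\<And>a. a \<in> lag_nodes w \<Longrightarrow> x a = y a"
  shows "lag w x = lag w y"
  unfolding lag_def using assms by (intro arg_cong2[where f="(+)"] sum.cong refl) (simp_all add: lag_nodes_intros)

lemma lag_measurable:
  assumes "lag_nodes w \<subseteq> P"
  shows "lag w \<in> borel_measurable (PiM P (\<lambda>_. borel))"
  unfolding lag_def[abs_def] using assms
  by (intro borel_measurable_add borel_measurable_sum measurable_component_singleton)
    (simp_all add: lag_nodes_intros subsetD)

lemma lag_nodes_subset: "w \<in> UH \<Longrightarrow> lag_nodes w \<subseteq> UH_nonroot"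
  by (auto simp: lag_nodes_def take_in_UH snoc_in_UH_nonroot)

lemma lag_nodes_fresh:
  assumes "w \<noteq> []" "w ! 0 < m"
  shows "[m] \<notin> lag_nodes w" "w @ [m] \<notin> lag_nodes w"
  using assms by (auto simp: lag_nodes_def) (metis not_le take_all_iff)

section \<open>Waiting times\<close>

locale cmj_tree = prob_space M for M :: "'a measure" +
  fixes X :: "nat list \<Rightarrow> 'a \<Rightarrow> ennreal" and \<alpha> :: real
  assumes alpha_pos: "\<alpha> > 0"
    and indep_nodes: "indep_vars (\<lambda>_. PiM UNIV (\<lambda>_. borel)) (\<lambda>u \<omega> j. X (u @ [Suc j]) \<omega>) UH"
    and copies: "\<And>u. u \<in> UH \<Longrightarrow>
        distr M (PiM UNIV (\<lambda>_. borel)) (\<lambda>\<omega> j. X (u @ [Suc j]) \<omega>)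
      = distr M (PiM UNIV (\<lambda>_. borel)) (\<lambda>\<omega> j. X [Suc j] \<omega>)"
    and indep_root_children: "indep_vars (\<lambda>_. borel) (\<lambda>i. X [i]) {1..}"
    and root_children_finite: "\<And>j. 1 \<le> j \<Longrightarrow> AE \<omega> in M. X [j] \<omega> < \<infinity>"
begin

lemma children_measurable:
  "u \<in> UH \<Longrightarrow> (\<lambda>\<omega> j. X (u @ [Suc j]) \<omega>) \<in> measurable M (PiM UNIV (\<lambda>_. borel))"
  using indep_nodes unfolding indep_vars_def2 by auto

lemma distr_children_fun:
  assumes u: "u \<in> UH" and f: "f \<in> measurable (PiM UNIV (\<lambda>_. borel)) N"
  shows "distr M N (\<lambda>\<omega>. f (\<lambda>j. X (u @ [Suc j]) \<omega>)) = distr M N (\<lambda>\<omega>. f (\<lambda>j. X [Suc j] \<omega>))"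
proof -
  have root: "[] \<in> UH" by (simp add: UH_def)
  have "distr M N (\<lambda>\<omega>. f (\<lambda>j. X (v @ [Suc j]) \<omega>))
      = distr (distr M (PiM UNIV (\<lambda>_. borel)) (\<lambda>\<omega> j. X (v @ [Suc j]) \<omega>)) N f" if "v \<in> UH" for v
    using distr_distr[OF f children_measurable[OF that]] by (simp add: comp_def)
  from this[OF u] this[OF root] show ?thesis using copies[OF u] by simp
qed

lemma X_measurable:
  assumes "a \<in> UH_nonroot"
  shows "random_variable borel (X a)"
  using assms
proof (rule UH_nonrootE)
  fix u j assume "u \<in> UH" "a = u @ [Suc j]"
  with measurable_compose[OF children_measurable[OF \<open>u \<in> UH\<close>] measurable_component_singleton[of j UNIV]]
  show ?thesis by simp
qed

lemma distr_X:
  assumes "a \<in> UH_nonroot"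
  shows "distr M borel (X a) = distr M borel (X [last a])"
  using assms
proof (rule UH_nonrootE)
  fix u j assume "u \<in> UH" "a = u @ [Suc j]"
  with distr_children_fun[OF \<open>u \<in> UH\<close> measurable_component_singleton[of j UNIV]]
  show ?thesis by simp
qed

lemma indep_children:
  assumes u: "u \<in> UH"
  shows "indep_vars (\<lambda>_. borel) (\<lambda>j. X (u @ [Suc j])) UNIV"
proof -
  have root_rv: "random_variable borel (X [Suc j])" for j
    by (simp add: X_measurable)
  have "indep_vars (\<lambda>_. borel) (\<lambda>j. X [Suc j]) UNIV"
    using indep_vars_reindex[of Suc UNIV "{1..}", OF _ _ indep_root_children] by auto
  then have "distr M (PiM UNIV (\<lambda>_. borel)) (\<lambda>\<omega> j. X [Suc j] \<omega>) = PiM UNIV (\<lambda>j. distr M borel (X [Suc j]))"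
    using indep_vars_iff_distr_eq_PiM'[of UNIV "\<lambda>j. X [Suc j]" "\<lambda>_. borel"] root_rv
    by (simp add: restrict_UNIV)
  moreover have "distr M borel (X (u @ [Suc j])) = distr M borel (X [Suc j])" for j
    using distr_X[OF snoc_in_UH_nonroot[OF u]] by simp
  ultimately have "distr M (PiM UNIV (\<lambda>_. borel)) (\<lambda>\<omega> j. X (u @ [Suc j]) \<omega>) = PiM UNIV (\<lambda>j. distr M borel (X (u @ [Suc j])))"
    using copies[OF u] by simp
  then show ?thesis
    using indep_vars_iff_distr_eq_PiM'[of UNIV "\<lambda>j. X (u @ [Suc j])" "\<lambda>_. borel"]
      X_measurable[OF snoc_in_UH_nonroot[OF u]]
    by (simp add: restrict_UNIV)
qed

lemma indep_X: "indep_vars (\<lambda>_. borel) X UH_nonroot"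
proof -
  have inj: "inj_on (\<lambda>a. (butlast a, last a - 1)) UH_nonroot"
  proof (rule inj_onI)
    fix a b assume "a \<in> UH_nonroot" "b \<in> UH_nonroot" "(butlast a, last a - 1) = (butlast b, last b - 1)"
    then show "a = b"
      using UH_nonroot_butlast(2)[of a] UH_nonroot_butlast(2)[of b] by simp
  qed
  have "butlast ` UH_nonroot \<subseteq> UH"
    using UH_nonroot_butlast(1) by blast
  then have "indep_vars (\<lambda>_. borel) (\<lambda>a. X (butlast a @ [Suc (last a - 1)])) UH_nonroot"
    using indep_vars_blocks[where Z="\<lambda>u j. X (u @ [Suc j])", OF indep_nodes indep_children inj]
    by simp
  moreover have "\<And>a. a \<in> UH_nonroot \<Longrightarrow> X (butlast a @ [Suc (last a - 1)]) = X a"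
    using UH_nonroot_butlast(2) by simp
  ultimately show ?thesis
    by (rule indep_vars_cong[OF refl _ refl, THEN iffD1, rotated])
qed

text \<open>Junk value \<open>0\<close> off the non-root nodes and on the null event \<open>X a \<omega> = \<infinity>\<close>.\<close>
definition wait_time :: "nat list \<Rightarrow> 'a \<Rightarrow> real" where
  "wait_time a \<omega> = (if a \<in> UH_nonroot then enn2real (X a \<omega>) else 0)"

lemma wait_time_nonneg [simp]: "0 \<le> wait_time a \<omega>"
  by (simp add: wait_time_def)

lemma wait_time_eq: "a \<in> UH_nonroot \<Longrightarrow> wait_time a = (\<lambda>\<omega>. enn2real (X a \<omega>))"
  by (simp add: wait_time_def fun_eq_iff)

lemma wait_time_measurable [measurable]: "wait_time a \<in> borel_measurable M"
proof (cases "a \<in> UH_nonroot")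
  case True
  then show ?thesis
    unfolding wait_time_eq[OF True] using X_measurable[OF True] by measurable
qed (simp add: wait_time_def[abs_def])

lemma indep_wait_time: "indep_vars (\<lambda>_. borel) wait_time UH_nonroot"
proof -
  have "indep_vars (\<lambda>_. borel) (\<lambda>a \<omega>. enn2real (X a \<omega>)) UH_nonroot"
    by (rule indep_vars_compose2[OF indep_X]) measurable
  then show ?thesis
    by (rule indep_vars_cong[THEN iffD1, rotated 3]) (auto simp: wait_time_eq)
qed

lemma distr_wait_time:
  assumes a: "a \<in> UH_nonroot"
  shows "distr M borel (wait_time a) = distr M borel (wait_time [last a])"
proof -
  have "distr M borel (wait_time b) = distr (distr M borel (X b)) borel enn2real" if "b \<in> UH_nonroot" for b
    unfolding wait_time_eq[OF that] using X_measurable[OF that] by (subst distr_distr) (auto simp: comp_def)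
  from this[OF a] this[OF last_in_UH_nonroot[OF a]] show ?thesis
    using distr_X[OF a] by simp
qed

lemma AE_X_eq_wait_time: "AE \<omega> in M. \<forall>a\<in>UH_nonroot. X a \<omega> = ennreal (wait_time a \<omega>)"
proof (rule AE_ball_countable'[OF _ countable_UH_nonroot])
  fix a assume a: "a \<in> UH_nonroot"
  have "AE x in distr M borel (X [last a]). x < \<infinity>"
    using root_children_finite[of "last a"] last_in_UH_nonroot[OF a] X_measurable
    by (subst AE_distr_iff) auto
  then have "AE \<omega> in M. X a \<omega> < \<infinity>"
    using X_measurable[OF a] by (subst (asm) distr_X[OF a, symmetric]) (simp add: AE_distr_iff)
  then show "AE \<omega> in M. X a \<omega> = ennreal (wait_time a \<omega>)"
    by eventually_elim (auto simp: wait_time_eq[OF a] less_top)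
qed

definition wait_times :: "nat list set \<Rightarrow> 'a \<Rightarrow> nat list \<Rightarrow> real" where
  "wait_times P \<omega> = restrict (\<lambda>a. wait_time a \<omega>) P"

lemma wait_times_measurable [measurable]: "wait_times P \<in> measurable M (PiM P (\<lambda>_. borel))"
  unfolding wait_times_def by (intro measurable_restrict) auto

lemma nn_integral_wait_times_mult:
  fixes f g :: "(nat list \<Rightarrow> real) \<Rightarrow> ennreal"
  assumes PQ: "P \<subseteq> UH_nonroot" "Q \<subseteq> UH_nonroot" "P \<inter> Q = {}"
    and f: "f \<in> borel_measurable (PiM P (\<lambda>_. borel))" and g: "g \<in> borel_measurable (PiM Q (\<lambda>_. borel))"
  shows "(\<integral>\<^sup>+\<omega>. f (wait_times P \<omega>) * g (wait_times Q \<omega>) \<partial>M) = (\<integral>\<^sup>+\<omega>. f (wait_times P \<omega>) \<partial>M) * (\<integral>\<^sup>+\<omega>. g (wait_times Q \<omega>) \<partial>M)"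
proof -
  have "indep_var (PiM P (\<lambda>_. borel)) (wait_times P) (PiM Q (\<lambda>_. borel)) (wait_times Q)"
    unfolding wait_times_def by (rule indep_var_restrict[OF indep_wait_time PQ(3,1,2)])
  then have "indep_var borel (f \<circ> wait_times P) borel (g \<circ> wait_times Q)"
    by (rule indep_var_compose[OF _ f g])
  then show ?thesis
    using indep_var_nn_integral by (simp add: comp_def)
qed

definition law :: "nat \<Rightarrow> real measure" where
  "law m = distr M borel (wait_time [m])"

text \<open>The factor \<open>E exp (\<alpha> (X'_m - X_m))\<close> of the hypothesis, \<open>X'\<close> an independent copy; the
  \<open>max 0\<close> is harmless since \<open>law m\<close> lives on \<open>[0, \<infinity>)\<close>.\<close>
definition gap_mgf :: "nat \<Rightarrow> ennreal" where
  "gap_mgf m = (\<integral>\<^sup>+p. ennreal (exp (\<alpha> * (max 0 (snd p) - max 0 (fst p)))) \<partial>(law m \<Otimes>\<^sub>M law m))"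

lemma sets_law [measurable_cong]: "sets (law m) = sets borel"
  by (simp add: law_def)

lemma prob_space_law: "prob_space (law m)"
  unfolding law_def by (rule prob_space_distr) simp

lemma nn_integral_exp_gap:
  assumes "w \<in> UH" "w \<noteq> []" "1 \<le> m"
  shows "(\<integral>\<^sup>+\<omega>. ennreal (exp (\<alpha> * (wait_time [m] \<omega> - wait_time (w @ [m]) \<omega>))) \<partial>M) = gap_mgf m"
proof -
  have a: "w @ [m] \<in> UH_nonroot" "[m] \<in> UH_nonroot" "w @ [m] \<noteq> [m]"
    using assms by (auto simp: snoc_in_UH_nonroot)
  have "indep_var borel (wait_time (w @ [m])) borel (wait_time [m])"
    using indep_var_restrict[OF indep_wait_time, of "{w @ [m]}" "{[m]}"] a
    by (auto dest: indep_var_compose[OF _ measurable_component_singleton measurable_component_singleton]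
        simp: comp_def)
  then have "distr M borel (wait_time (w @ [m])) \<Otimes>\<^sub>M distr M borel (wait_time [m])
      = distr M (borel \<Otimes>\<^sub>M borel) (\<lambda>\<omega>. (wait_time (w @ [m]) \<omega>, wait_time [m] \<omega>))"
    by (simp add: indep_var_distribution_eq)
  then have "law m \<Otimes>\<^sub>M law m = distr M (borel \<Otimes>\<^sub>M borel) (\<lambda>\<omega>. (wait_time (w @ [m]) \<omega>, wait_time [m] \<omega>))"
    using distr_wait_time[OF a(1)] unfolding law_def by simp
  then show ?thesis
    unfolding gap_mgf_def by (simp add: nn_integral_distr max_def)
qed

lemma gap_mgf_ge_1: "1 \<le> gap_mgf m"
proof -
  interpret law: prob_space "law m" by (rule prob_space_law)
  interpret pair_prob_space "law m" "law m" ..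
  let ?g = "\<lambda>p :: real \<times> real. \<alpha> * (max 0 (snd p) - max 0 (fst p))"
  have swap: "gap_mgf m = (\<integral>\<^sup>+p. ennreal (exp (- ?g p)) \<partial>(law m \<Otimes>\<^sub>M law m))"
    unfolding gap_mgf_def by (subst distr_pair_swap) (simp add: nn_integral_distr case_prod_beta algebra_simps)
  have "2 = (\<integral>\<^sup>+p. 2 \<partial>(law m \<Otimes>\<^sub>M law m))"
    by (simp add: emeasure_space_1)
  also have "\<dots> \<le> (\<integral>\<^sup>+p. ennreal (exp (?g p)) + ennreal (exp (- ?g p)) \<partial>(law m \<Otimes>\<^sub>M law m))"
    using exp_plus_exp_minus_ge_2 by (intro nn_integral_mono) (simp add: ennreal_plus[symmetric] ennreal_leI del: ennreal_plus)
  also have "\<dots> = 2 * gap_mgf m"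
    by (subst nn_integral_add) (simp_all add: gap_mgf_def swap[symmetric] mult_2)
  finally have "2 * 1 \<le> 2 * gap_mgf m"
    by simp
  then show ?thesis
    by (subst (asm) ennreal_mult_le_mult_iff) auto
qed

section \<open>An exponential maximal inequality\<close>

text \<open>The gap walk started at \<open>t - d\<close> with increments \<open>X (w @ [m]) - X [m]\<close>, \<open>m > n0\<close>, reaches
  \<open>(-\<infinity>, 0]\<close> within \<open>N\<close> steps.\<close>
definition catches_up_within :: "nat list \<Rightarrow> nat \<Rightarrow> nat \<Rightarrow> real \<Rightarrow> real \<Rightarrow> 'a \<Rightarrow> bool" where
  "catches_up_within w n0 N t d \<omega> \<longleftrightarrow>
     (\<exists>n\<le>N. t + (\<Sum>m\<in>{n0<..n0+n}. wait_time (w @ [m]) \<omega>) \<le> d + (\<Sum>m\<in>{n0<..n0+n}. wait_time [m] \<omega>))"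

lemma catches_up_within_0: "catches_up_within w n0 0 t d \<omega> \<longleftrightarrow> t \<le> d"
  by (simp add: catches_up_within_def)

lemma catches_up_within_Suc:
  "catches_up_within w n0 (Suc N) t d \<omega> \<longleftrightarrow> t \<le> d \<or>
     catches_up_within w (Suc n0) N (t + wait_time (w @ [Suc n0]) \<omega>) (d + wait_time [Suc n0] \<omega>) \<omega>"
  unfolding catches_up_within_def ex_le_Suc_iff greaterThanAtMost_Suc_insert
  by (simp add: algebra_simps)

lemma catches_up_within_mono: "catches_up_within w n0 N t d \<omega> \<Longrightarrow> catches_up_within w n0 (Suc N) t d \<omega>"
  unfolding catches_up_within_def by (meson le_Suc_eq)

lemma catches_up_within_measurable [measurable]:
  assumes [measurable]: "T \<in> borel_measurable M" "D \<in> borel_measurable M"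
  shows "Measurable.pred M (\<lambda>\<omega>. catches_up_within w n0 N (T \<omega>) (D \<omega>) \<omega>)"
  unfolding catches_up_within_def by measurable

lemma one_le_exp_gap: "t \<le> d \<Longrightarrow> 1 \<le> ennreal (exp (\<alpha> * (d - t)))"
  using alpha_pos by (simp add: ennreal_leI)

lemma nn_integral_exp_gap_step:
  assumes w: "w \<in> UH" "w \<noteq> []" and m: "1 \<le> m"
    and P: "P \<subseteq> UH_nonroot" "[m] \<notin> P" "w @ [m] \<notin> P"
    and [measurable]: "f \<in> borel_measurable (PiM P (\<lambda>_. borel))" "\<tau> \<in> borel_measurable (PiM P (\<lambda>_. borel))"
      "\<delta> \<in> borel_measurable (PiM P (\<lambda>_. borel))"
  shows "(\<integral>\<^sup>+\<omega>. f (wait_times P \<omega>) *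
        ennreal (exp (\<alpha> * ((\<delta> (wait_times P \<omega>) + wait_time [m] \<omega>) - (\<tau> (wait_times P \<omega>) + wait_time (w @ [m]) \<omega>)))) \<partial>M)
    = gap_mgf m * (\<integral>\<^sup>+\<omega>. f (wait_times P \<omega>) * ennreal (exp (\<alpha> * (\<delta> (wait_times P \<omega>) - \<tau> (wait_times P \<omega>)))) \<partial>M)"
proof -
  let ?Q = "{[m], w @ [m]}"
  define g where "g y = ennreal (exp (\<alpha> * (y [m] - y (w @ [m]))))" for y :: "nat list \<Rightarrow> real"
  have [measurable]: "(\<lambda>y. y a) \<in> measurable (PiM ?Q (\<lambda>_. borel)) borel" if "a \<in> ?Q" for a
    using that by (rule measurable_component_singleton)
  have "g \<in> borel_measurable (PiM ?Q (\<lambda>_. borel))"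
    unfolding g_def[abs_def] by measurable
  moreover have "(\<lambda>x. f x * ennreal (exp (\<alpha> * (\<delta> x - \<tau> x)))) \<in> borel_measurable (PiM P (\<lambda>_. borel))"
    by measurable
  ultimately have "(\<integral>\<^sup>+\<omega>. f (wait_times P \<omega>) * ennreal (exp (\<alpha> * (\<delta> (wait_times P \<omega>) - \<tau> (wait_times P \<omega>)))) * g (wait_times ?Q \<omega>) \<partial>M)
      = (\<integral>\<^sup>+\<omega>. f (wait_times P \<omega>) * ennreal (exp (\<alpha> * (\<delta> (wait_times P \<omega>) - \<tau> (wait_times P \<omega>)))) \<partial>M)
        * (\<integral>\<^sup>+\<omega>. g (wait_times ?Q \<omega>) \<partial>M)"
    using P w m by (intro nn_integral_wait_times_mult) (auto simp: snoc_in_UH_nonroot)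
  moreover have "(\<integral>\<^sup>+\<omega>. g (wait_times ?Q \<omega>) \<partial>M) = gap_mgf m"
    using nn_integral_exp_gap[OF w m] by (simp add: g_def wait_times_def)
  moreover have "exp (\<alpha> * ((d + r) - (t + s))) = exp (\<alpha> * (d - t)) * exp (\<alpha> * (r - s))" for d r t s
    by (simp add: exp_add[symmetric] algebra_simps)
  ultimately show ?thesis
    by (simp add: g_def wait_times_def ennreal_mult'' ac_simps)
qed

lemma mult_catches_up_within_Suc_le:
  "c * of_bool (catches_up_within w n0 (Suc N) t d \<omega>)
    \<le> c * of_bool (t \<le> d) * ennreal (exp (\<alpha> * (d - t)))
      + c * of_bool (d < t) * of_bool (catches_up_within w (Suc n0) N
          (t + wait_time (w @ [Suc n0]) \<omega>) (d + wait_time [Suc n0] \<omega>) \<omega>)"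
  using mult_left_mono[OF one_le_exp_gap, of t d c] by (cases "t \<le> d") (auto simp: catches_up_within_Suc)

text \<open>The process \<open>exp (\<alpha> * (d - t)) / \<Prod>gap_mgf\<close> along the gap walk is a martingale; stopping it
  when the walk first drops to \<open>0\<close> gives this maximal inequality.\<close>
lemma catches_up_within_bound:
  assumes w: "w \<in> UH" "w \<noteq> []"
  shows "P \<subseteq> UH_nonroot \<Longrightarrow> (\<And>m. n0 < m \<Longrightarrow> [m] \<notin> P \<and> w @ [m] \<notin> P) \<Longrightarrow>
    \<Gamma> \<in> borel_measurable (PiM P (\<lambda>_. borel)) \<Longrightarrow> \<tau> \<in> borel_measurable (PiM P (\<lambda>_. borel)) \<Longrightarrow>
    \<delta> \<in> borel_measurable (PiM P (\<lambda>_. borel)) \<Longrightarrow>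
    (\<integral>\<^sup>+\<omega>. \<Gamma> (wait_times P \<omega>) * of_bool (catches_up_within w n0 N (\<tau> (wait_times P \<omega>)) (\<delta> (wait_times P \<omega>)) \<omega>) \<partial>M)
      \<le> (\<Prod>m\<in>{n0<..n0+N}. gap_mgf m) *
         (\<integral>\<^sup>+\<omega>. \<Gamma> (wait_times P \<omega>) * ennreal (exp (\<alpha> * (\<delta> (wait_times P \<omega>) - \<tau> (wait_times P \<omega>)))) \<partial>M)"
proof (induction N arbitrary: n0 P \<Gamma> \<tau> \<delta>)
  case 0
  have "\<Gamma> x * of_bool (\<tau> x \<le> \<delta> x) \<le> \<Gamma> x * ennreal (exp (\<alpha> * (\<delta> x - \<tau> x)))" for x
    using mult_left_mono[OF one_le_exp_gap, of "\<tau> x" "\<delta> x" "\<Gamma> x"] by (cases "\<tau> x \<le> \<delta> x") auto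
  then show ?case
    by (simp add: catches_up_within_0 nn_integral_mono)
next
  case (Suc N)
  note [measurable] = Suc.prems(3,4,5)
  define R where "R = [Suc n0]"
  define W where "W = w @ [Suc n0]"
  define P' where "P' = insert R (insert W P)"
  have RW: "R \<in> UH_nonroot" "W \<in> UH_nonroot" "R \<notin> P" "W \<notin> P"
    using Suc.prems(2)[of "Suc n0"] w by (auto simp: R_def W_def snoc_in_UH_nonroot)
  have P': "P' \<subseteq> UH_nonroot" "\<And>m. Suc n0 < m \<Longrightarrow> [m] \<notin> P' \<and> w @ [m] \<notin> P'"
    using Suc.prems(1,2) RW w by (auto simp: P'_def R_def W_def append_eq_Cons_conv)
  have [measurable]: "(\<lambda>x. restrict x P) \<in> measurable (PiM P' (\<lambda>_. borel)) (PiM P (\<lambda>_. borel))"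
    by (rule measurable_restrict_subset) (auto simp: P'_def)
  have [measurable]: "(\<lambda>x. x a) \<in> measurable (PiM P' (\<lambda>_. borel)) borel" if "a \<in> {R, W}" for a
    using that by (intro measurable_component_singleton) (auto simp: P'_def)
  have shifted_meas:
    "(\<lambda>x. \<Gamma> (restrict x P) * of_bool (\<delta> (restrict x P) < \<tau> (restrict x P))) \<in> borel_measurable (PiM P' (\<lambda>_. borel))"
    "(\<lambda>x. \<tau> (restrict x P) + x W) \<in> borel_measurable (PiM P' (\<lambda>_. borel))"
    "(\<lambda>x. \<delta> (restrict x P) + x R) \<in> borel_measurable (PiM P' (\<lambda>_. borel))"
    by measurable
  have wait_times_P': "restrict (wait_times P' \<omega>) P = wait_times P \<omega>"
    "wait_times P' \<omega> R = wait_time R \<omega>" "wait_times P' \<omega> W = wait_time W \<omega>" for \<omega>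
    by (auto simp: wait_times_def P'_def fun_eq_iff)
  define t where "t \<omega> = \<tau> (wait_times P \<omega>)" for \<omega>
  define d where "d \<omega> = \<delta> (wait_times P \<omega>)" for \<omega>
  define \<gamma> where "\<gamma> \<omega> = \<Gamma> (wait_times P \<omega>)" for \<omega>
  define C where "C = gap_mgf (Suc n0) * (\<Prod>m\<in>{Suc n0<..Suc n0+N}. gap_mgf m)"
  have [measurable]: "t \<in> borel_measurable M" "d \<in> borel_measurable M" "\<gamma> \<in> borel_measurable M"
    unfolding t_def[abs_def] d_def[abs_def] \<gamma>_def[abs_def] by measurable
  have C_eq: "(\<Prod>m\<in>{n0<..n0 + Suc N}. gap_mgf m) = C"
    unfolding C_def greaterThanAtMost_Suc_insert by simp
  have C_ge_1: "1 \<le> C"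
    unfolding C_eq[symmetric] by (intro prod_ge_1 gap_mgf_ge_1)
  have "(\<integral>\<^sup>+\<omega>. \<gamma> \<omega> * of_bool (d \<omega> < t \<omega>) * of_bool (catches_up_within w (Suc n0) N (t \<omega> + wait_time W \<omega>) (d \<omega> + wait_time R \<omega>) \<omega>) \<partial>M)
     \<le> (\<Prod>m\<in>{Suc n0<..Suc n0+N}. gap_mgf m)
       * (\<integral>\<^sup>+\<omega>. \<gamma> \<omega> * of_bool (d \<omega> < t \<omega>) * ennreal (exp (\<alpha> * ((d \<omega> + wait_time R \<omega>) - (t \<omega> + wait_time W \<omega>)))) \<partial>M)"
    using Suc.IH[of _ "Suc n0", OF P' shifted_meas] by (simp add: wait_times_P' \<gamma>_def t_def d_def)
  also have "\<dots> = C * (\<integral>\<^sup>+\<omega>. \<gamma> \<omega> * of_bool (d \<omega> < t \<omega>) * ennreal (exp (\<alpha> * (d \<omega> - t \<omega>))) \<partial>M)"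
    using nn_integral_exp_gap_step[OF w _ Suc.prems(1), of "Suc n0" "\<lambda>x. \<Gamma> x * of_bool (\<delta> x < \<tau> x)" \<tau> \<delta>] RW
    by (simp add: C_def \<gamma>_def t_def d_def R_def W_def ac_simps)
  finally have step: "(\<integral>\<^sup>+\<omega>. \<gamma> \<omega> * of_bool (d \<omega> < t \<omega>) * of_bool (catches_up_within w (Suc n0) N (t \<omega> + wait_time W \<omega>) (d \<omega> + wait_time R \<omega>) \<omega>) \<partial>M)
     \<le> C * (\<integral>\<^sup>+\<omega>. \<gamma> \<omega> * of_bool (d \<omega> < t \<omega>) * ennreal (exp (\<alpha> * (d \<omega> - t \<omega>))) \<partial>M)" .
  have "(\<integral>\<^sup>+\<omega>. \<gamma> \<omega> * of_bool (catches_up_within w n0 (Suc N) (t \<omega>) (d \<omega>) \<omega>) \<partial>M)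
      \<le> (\<integral>\<^sup>+\<omega>. \<gamma> \<omega> * of_bool (t \<omega> \<le> d \<omega>) * ennreal (exp (\<alpha> * (d \<omega> - t \<omega>))) \<partial>M)
        + (\<integral>\<^sup>+\<omega>. \<gamma> \<omega> * of_bool (d \<omega> < t \<omega>) * of_bool (catches_up_within w (Suc n0) N (t \<omega> + wait_time W \<omega>) (d \<omega> + wait_time R \<omega>) \<omega>) \<partial>M)"
    unfolding R_def W_def
    by (subst nn_integral_add[symmetric]) (auto intro: nn_integral_mono mult_catches_up_within_Suc_le)
  also have "\<dots> \<le> C * (\<integral>\<^sup>+\<omega>. \<gamma> \<omega> * of_bool (t \<omega> \<le> d \<omega>) * ennreal (exp (\<alpha> * (d \<omega> - t \<omega>))) \<partial>M)
      + C * (\<integral>\<^sup>+\<omega>. \<gamma> \<omega> * of_bool (d \<omega> < t \<omega>) * ennreal (exp (\<alpha> * (d \<omega> - t \<omega>))) \<partial>M)"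
    using mult_right_mono[OF C_ge_1] step by (intro add_mono) auto
  also have "\<dots> = C * (\<integral>\<^sup>+\<omega>. \<gamma> \<omega> * ennreal (exp (\<alpha> * (d \<omega> - t \<omega>))) \<partial>M)"
    by (simp add: nn_integral_add[symmetric] distrib_left[symmetric])
      (intro arg_cong2[where f="(*)"] nn_integral_cong refl, simp add: of_bool_def)
  finally show ?case
    unfolding C_eq \<gamma>_def t_def d_def .
qed

section \<open>Catching up with the root\<close>

definition partial_laplace :: "nat \<Rightarrow> ennreal" where
  "partial_laplace c = (\<integral>\<^sup>+\<omega>. ennreal (exp (- \<alpha> * (\<Sum>j\<in>{1..c}. wait_time [j] \<omega>))) \<partial>M)"

lemma partial_laplace_children:
  assumes u: "u \<in> UH"
  shows "(\<integral>\<^sup>+\<omega>. ennreal (exp (- \<alpha> * (\<Sum>j\<in>{1..c}. wait_time (u @ [j]) \<omega>))) \<partial>M) = partial_laplace c"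
proof -
  define F where "F s = ennreal (exp (- \<alpha> * (\<Sum>j\<in>{1..c}. enn2real (s (j - 1)))))" for s :: "nat \<Rightarrow> ennreal"
  have F: "F \<in> borel_measurable (PiM UNIV (\<lambda>_. borel))"
    unfolding F_def[abs_def] by measurable
  have F_children: "(\<integral>\<^sup>+\<omega>. ennreal (exp (- \<alpha> * (\<Sum>j\<in>{1..c}. wait_time (v @ [j]) \<omega>))) \<partial>M)
      = (\<integral>\<^sup>+x. x \<partial>distr M borel (\<lambda>\<omega>. F (\<lambda>j. X (v @ [Suc j]) \<omega>)))" if v: "v \<in> UH" for v
  proof -
    have "(\<Sum>j\<in>{1..c}. wait_time (v @ [j]) \<omega>) = (\<Sum>j\<in>{1..c}. enn2real (X (v @ [Suc (j - 1)]) \<omega>))" for \<omega>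
      using v by (intro sum.cong) (auto simp: wait_time_eq snoc_in_UH_nonroot)
    then show ?thesis
      using measurable_compose[OF children_measurable[OF v] F] by (simp add: nn_integral_distr F_def)
  qed
  show ?thesis
    using F_children[OF u] F_children[of "[]"] distr_children_fun[OF u F]
    by (simp add: partial_laplace_def UH_def)
qed

lemma nn_integral_exp_lag:
  assumes w: "w \<in> UH_nonroot"
  shows "(\<integral>\<^sup>+\<omega>. ennreal (exp (- \<alpha> * lag w (\<lambda>a. wait_time a \<omega>))) \<partial>M) = (\<Prod>l<length w. partial_laplace (w ! l))"
proof -
  let ?k = "length w"
  have wU: "w \<in> UH" "w \<noteq> []" using w by (auto simp: UH_nonroot_def)
  define c where "c l = (if l = ?k then w ! 0 else w ! l)" for l
  define S where "S l \<omega> = (\<Sum>j\<in>{1..c l}. wait_time (take l w @ [j]) \<omega>)" for l \<omega>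
  have ivl: "{1..?k} = insert ?k {1..<?k}" "{..<?k} = insert 0 {1..<?k}"
    using wU(2) by (auto simp: neq_Nil_conv)
  have lag_eq: "lag w (\<lambda>a. wait_time a \<omega>) = (\<Sum>l\<in>{1..?k}. S l \<omega>)" for \<omega>
    unfolding lag_eq_sum_levels[OF wU(2)] S_def c_def ..
  define KK where "KK l = (\<lambda>j. take l w @ [j]) ` {1..c l}" for l
  define h where "h l x = ennreal (exp (- \<alpha> * (\<Sum>j\<in>{1..c l}. x (take l w @ [j]))))" for l x
  have "indep_vars (\<lambda>l. PiM (KK l) (\<lambda>_. borel)) (\<lambda>l. wait_times (KK l)) {1..?k}"
    unfolding wait_times_def using take_in_UH[OF wU(1)]
    by (intro indep_vars_restrict[OF indep_wait_time])
      (auto simp: disjoint_family_on_def KK_def snoc_in_UH_nonroot dest: arg_cong[of _ _ length])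
  moreover have "h l \<in> borel_measurable (PiM (KK l) (\<lambda>_. borel))" for l
  proof -
    have [measurable]: "(\<lambda>x. x (take l w @ [j])) \<in> borel_measurable (PiM (KK l) (\<lambda>_. borel))" if "j \<in> {1..c l}" for j
      using that by (intro measurable_component_singleton) (auto simp: KK_def)
    show ?thesis
      unfolding h_def[abs_def] by measurable
  qed
  ultimately have indep: "indep_vars (\<lambda>_. borel) (\<lambda>l \<omega>. h l (wait_times (KK l) \<omega>)) {1..?k}"
    by (rule indep_vars_compose2)
  have h_eq: "h l (wait_times (KK l) \<omega>) = ennreal (exp (- \<alpha> * S l \<omega>))" for l \<omega>
    unfolding h_def S_def by (simp add: wait_times_def KK_def)
  have "(\<integral>\<^sup>+\<omega>. ennreal (exp (- \<alpha> * lag w (\<lambda>a. wait_time a \<omega>))) \<partial>M) = (\<integral>\<^sup>+\<omega>. (\<Prod>l\<in>{1..?k}. h l (wait_times (KK l) \<omega>)) \<partial>M)"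
    by (simp add: h_eq lag_eq sum_distrib_left exp_sum prod_ennreal)
  also have "\<dots> = (\<Prod>l\<in>{1..?k}. \<integral>\<^sup>+\<omega>. h l (wait_times (KK l) \<omega>) \<partial>M)"
    by (rule indep_vars_nn_integral[OF _ indep]) auto
  also have "\<dots> = (\<Prod>l\<in>{1..?k}. partial_laplace (c l))"
    unfolding h_eq S_def by (intro prod.cong refl partial_laplace_children take_in_UH wU(1))
  also have "\<dots> = (\<Prod>l<?k. partial_laplace (w ! l))"
  proof -
    have "(\<Prod>l\<in>{1..<?k}. partial_laplace (c l)) = (\<Prod>l\<in>{1..<?k}. partial_laplace (w ! l))"
      by (intro prod.cong) (auto simp: c_def)
    moreover have "c ?k = w ! 0"
      by (simp add: c_def)
    ultimately show ?thesis
      unfolding ivl by (simp add: mult.commute)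
  qed
  finally show ?thesis .
qed

lemma lag_wait_time_measurable [measurable]: "(\<lambda>\<omega>. lag w (\<lambda>a. wait_time a \<omega>)) \<in> borel_measurable M"
  unfolding lag_def by measurable

definition catches_root :: "nat list \<Rightarrow> 'a \<Rightarrow> bool" where
  "catches_root w \<omega> \<longleftrightarrow> (\<exists>j\<ge>1. lag w (\<lambda>a. wait_time a \<omega>) + (\<Sum>m\<in>{w!0<..w!0+j}. wait_time (w @ [m]) \<omega>)
     \<le> (\<Sum>m\<in>{w!0<..w!0+j}. wait_time [m] \<omega>))"

lemma catches_root_measurable [measurable]: "Measurable.pred M (catches_root w)"
  unfolding catches_root_def by measurable

lemma catches_root_catches_up_within:
  assumes n0: "w ! 0 \<le> n0" and catches: "catches_root w \<omega>"
  shows "\<exists>N. catches_up_within w n0 N (lag w (\<lambda>a. wait_time a \<omega>)) (\<Sum>m\<in>{w!0<..n0}. wait_time [m] \<omega>) \<omega>"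
proof -
  let ?i = "w ! 0" and ?lag = "lag w (\<lambda>a. wait_time a \<omega>)"
  define W where "W A = (\<Sum>m\<in>A. wait_time (w @ [m]) \<omega>)" for A
  define R where "R A = (\<Sum>m\<in>A. wait_time [m] \<omega>)" for A
  have mono: "W A \<le> W B" "R A \<le> R B" if "A \<subseteq> B" "finite B" for A B
    using that unfolding W_def R_def by (auto intro!: sum_mono2)
  from catches obtain j where "1 \<le> j" and j: "?lag + W {?i<..?i + j} \<le> R {?i<..?i + j}"
    unfolding catches_root_def W_def R_def by blast
  show ?thesis
  proof (cases "?i + j \<le> n0")
    case True
    have "R {?i<..?i + j} \<le> R {?i<..n0}"
      using True by (intro mono) auto
    moreover have "0 \<le> W {?i<..?i + j}"
      unfolding W_def by (intro sum_nonneg) simp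
    ultimately have "?lag \<le> R {?i<..n0}"
      using j by linarith
    then show ?thesis
      by (intro exI[of _ 0]) (simp add: catches_up_within_0 R_def)
  next
    case False
    then have n0_split: "n0 + (?i + j - n0) = ?i + j" by simp
    have "W {n0<..?i + j} \<le> W {?i<..?i + j}"
      using n0 by (intro mono) auto
    moreover have "R {?i<..?i + j} = R {?i<..n0} + R {n0<..?i + j}"
      unfolding R_def using False n0 by (subst sum.union_disjoint[symmetric]) (auto intro: sum.cong)
    ultimately have "?lag + W {n0<..n0 + (?i + j - n0)} \<le> R {?i<..n0} + R {n0<..n0 + (?i + j - n0)}"
      using j unfolding n0_split by linarith
    then show ?thesis
      unfolding catches_up_within_def W_def R_def by blast
  qed
qed

lemma nn_integral_catches_up_eventually_le:
  assumes w: "w \<in> UH" "w \<noteq> []"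
    and P: "P \<subseteq> UH_nonroot" "\<And>m. n0 < m \<Longrightarrow> [m] \<notin> P \<and> w @ [m] \<notin> P"
    and [measurable]: "\<Gamma> \<in> borel_measurable (PiM P (\<lambda>_. borel))" "\<tau> \<in> borel_measurable (PiM P (\<lambda>_. borel))"
      "\<delta> \<in> borel_measurable (PiM P (\<lambda>_. borel))"
    and L: "\<And>N. (\<Prod>m\<in>{n0<..n0+N}. gap_mgf m) \<le> L"
  shows "(\<integral>\<^sup>+\<omega>. \<Gamma> (wait_times P \<omega>) * of_bool (\<exists>N. catches_up_within w n0 N (\<tau> (wait_times P \<omega>)) (\<delta> (wait_times P \<omega>)) \<omega>) \<partial>M)
    \<le> L * (\<integral>\<^sup>+\<omega>. \<Gamma> (wait_times P \<omega>) * ennreal (exp (\<alpha> * (\<delta> (wait_times P \<omega>) - \<tau> (wait_times P \<omega>)))) \<partial>M)"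
proof -
  define F where "F N \<omega> = \<Gamma> (wait_times P \<omega>) * of_bool (catches_up_within w n0 N (\<tau> (wait_times P \<omega>)) (\<delta> (wait_times P \<omega>)) \<omega>)" for N \<omega>
  have [measurable]: "F N \<in> borel_measurable M" for N
    unfolding F_def[abs_def] by measurable
  have "incseq F"
    by (intro incseq_SucI le_funI) (auto simp: F_def intro: mult_left_mono catches_up_within_mono)
  have "(\<integral>\<^sup>+\<omega>. \<Gamma> (wait_times P \<omega>) * of_bool (\<exists>N. catches_up_within w n0 N (\<tau> (wait_times P \<omega>)) (\<delta> (wait_times P \<omega>)) \<omega>) \<partial>M)
      \<le> (\<integral>\<^sup>+\<omega>. (SUP N. F N \<omega>) \<partial>M)"
  proof (intro nn_integral_mono)
    fix \<omega>
    show "\<Gamma> (wait_times P \<omega>) * of_bool (\<exists>N. catches_up_within w n0 N (\<tau> (wait_times P \<omega>)) (\<delta> (wait_times P \<omega>)) \<omega>)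
        \<le> (SUP N. F N \<omega>)"
    proof (cases "\<exists>N. catches_up_within w n0 N (\<tau> (wait_times P \<omega>)) (\<delta> (wait_times P \<omega>)) \<omega>")
      case True
      then obtain N where "catches_up_within w n0 N (\<tau> (wait_times P \<omega>)) (\<delta> (wait_times P \<omega>)) \<omega>" ..
      then have "\<Gamma> (wait_times P \<omega>) = F N \<omega>"
        by (simp add: F_def)
      then show ?thesis
        using True SUP_upper[of N UNIV "\<lambda>N. F N \<omega>"] by simp
    qed simp
  qed
  also have "\<dots> = (SUP N. \<integral>\<^sup>+\<omega>. F N \<omega> \<partial>M)"
    by (rule nn_integral_monotone_convergence_SUP[OF \<open>incseq F\<close>]) simp
  also have "\<dots> \<le> L * (\<integral>\<^sup>+\<omega>. \<Gamma> (wait_times P \<omega>) * ennreal (exp (\<alpha> * (\<delta> (wait_times P \<omega>) - \<tau> (wait_times P \<omega>)))) \<partial>M)"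
  proof (rule SUP_least)
    fix N
    show "(\<integral>\<^sup>+\<omega>. F N \<omega> \<partial>M)
        \<le> L * (\<integral>\<^sup>+\<omega>. \<Gamma> (wait_times P \<omega>) * ennreal (exp (\<alpha> * (\<delta> (wait_times P \<omega>) - \<tau> (wait_times P \<omega>)))) \<partial>M)"
      unfolding F_def
      by (rule order_trans[OF catches_up_within_bound[OF w P] mult_right_mono[OF L]]) simp_all
  qed
  finally show ?thesis .
qed

lemma prod_gap_mgf_mono:
  assumes "A \<subseteq> B" "finite B"
  shows "prod gap_mgf A \<le> prod gap_mgf B"
proof -
  have "prod gap_mgf B = prod gap_mgf (B - A) * prod gap_mgf A"
    using assms by (intro prod.subset_diff)
  moreover have "1 \<le> prod gap_mgf (B - A)"
    by (intro prod_ge_1 gap_mgf_ge_1)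
  ultimately show ?thesis
    using mult_right_mono[of 1 _ "prod gap_mgf A"] by simp
qed

lemma prod_gap_mgf_le:
  assumes L: "\<And>n. (\<Prod>m\<in>{K<..n}. gap_mgf m) \<le> L" and "K \<le> n0"
  shows "(\<Prod>m\<in>{n0<..n0+N}. gap_mgf m) \<le> L"
proof -
  have "(\<Prod>m\<in>{n0<..n0+N}. gap_mgf m) \<le> (\<Prod>m\<in>{K<..n0+N}. gap_mgf m)"
    using \<open>K \<le> n0\<close> by (intro prod_gap_mgf_mono) auto
  then show ?thesis
    using L[of "n0 + N"] by (rule order_trans)
qed

text \<open>The walk is started at \<open>max (w ! 0) K\<close>: the root's children up to \<open>K\<close> join the head start
  \<open>\<delta>\<close>, paid for by the weight, so that only \<open>gap_mgf m\<close> with \<open>m > K\<close> enters.\<close>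
lemma catches_root_weighted_le:
  assumes w: "w \<in> UH_nonroot" and L: "\<And>n. (\<Prod>m\<in>{K<..n}. gap_mgf m) \<le> L"
  shows "(\<integral>\<^sup>+\<omega>. ennreal (exp (- \<alpha> * (\<Sum>m\<in>{1..K}. wait_time [m] \<omega>))) * of_bool (catches_root w \<omega>) \<partial>M)
    \<le> L * (\<Prod>l<length w. partial_laplace (w ! l))"
proof -
  let ?i = "w ! 0"
  have wU: "w \<in> UH" "w \<noteq> []"
    using w by (auto simp: UH_nonroot_def)
  define n0 where "n0 = max ?i K"
  define P where "P = lag_nodes w \<union> (\<lambda>m. [m]) ` {?i<..n0}"
  define \<delta> where "\<delta> x = (\<Sum>m\<in>{?i<..n0}. x [m])" for x :: "nat list \<Rightarrow> real"
  define \<Gamma> where "\<Gamma> x = ennreal (exp (- \<alpha> * \<delta> x))" for x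
  have P_sub: "P \<subseteq> UH_nonroot"
    using lag_nodes_subset[OF wU(1)] by (auto simp: P_def)
  have P_fresh: "[m] \<notin> P \<and> w @ [m] \<notin> P" if "n0 < m" for m
    using that lag_nodes_fresh[OF wU(2), of m] wU(2) by (auto simp: P_def n0_def)
  have [measurable]: "(\<lambda>x. x [m]) \<in> borel_measurable (PiM P (\<lambda>_. borel))" if "m \<in> {?i<..n0}" for m
    using that by (intro measurable_component_singleton) (auto simp: P_def)
  have meas: "\<Gamma> \<in> borel_measurable (PiM P (\<lambda>_. borel))" "lag w \<in> borel_measurable (PiM P (\<lambda>_. borel))"
    "\<delta> \<in> borel_measurable (PiM P (\<lambda>_. borel))"
    unfolding \<Gamma>_def[abs_def] \<delta>_def[abs_def] using lag_measurable[of w P] by (auto simp: P_def)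
  have lag_eq: "lag w (wait_times P \<omega>) = lag w (\<lambda>a. wait_time a \<omega>)" for \<omega>
    by (rule lag_cong) (simp add: wait_times_def P_def)
  have \<delta>_eq: "\<delta> (wait_times P \<omega>) = (\<Sum>m\<in>{?i<..n0}. wait_time [m] \<omega>)" for \<omega>
    unfolding \<delta>_def by (intro sum.cong) (auto simp: wait_times_def P_def)
  have "ennreal (exp (- \<alpha> * (\<Sum>m\<in>{1..K}. wait_time [m] \<omega>))) * of_bool (catches_root w \<omega>)
      \<le> \<Gamma> (wait_times P \<omega>) * of_bool (\<exists>N. catches_up_within w n0 N (lag w (wait_times P \<omega>)) (\<delta> (wait_times P \<omega>)) \<omega>)"
    for \<omega>
  proof -
    have "(\<Sum>m\<in>{?i<..n0}. wait_time [m] \<omega>) \<le> (\<Sum>m\<in>{1..K}. wait_time [m] \<omega>)"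
      by (intro sum_mono2) (auto simp: n0_def)
    then have "exp (- \<alpha> * (\<Sum>m\<in>{1..K}. wait_time [m] \<omega>)) \<le> exp (- \<alpha> * \<delta> (wait_times P \<omega>))"
      using alpha_pos by (simp add: \<delta>_eq)
    then show ?thesis
      using catches_root_catches_up_within[of w n0 \<omega>]
      by (auto simp: \<Gamma>_def lag_eq \<delta>_eq n0_def ennreal_leI)
  qed
  then have "(\<integral>\<^sup>+\<omega>. ennreal (exp (- \<alpha> * (\<Sum>m\<in>{1..K}. wait_time [m] \<omega>))) * of_bool (catches_root w \<omega>) \<partial>M)
      \<le> (\<integral>\<^sup>+\<omega>. \<Gamma> (wait_times P \<omega>) * of_bool (\<exists>N. catches_up_within w n0 N (lag w (wait_times P \<omega>)) (\<delta> (wait_times P \<omega>)) \<omega>) \<partial>M)"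
    by (rule nn_integral_mono)
  also have "\<dots> \<le> L * (\<integral>\<^sup>+\<omega>. \<Gamma> (wait_times P \<omega>) * ennreal (exp (\<alpha> * (\<delta> (wait_times P \<omega>) - lag w (wait_times P \<omega>)))) \<partial>M)"
    using prod_gap_mgf_le[OF L, of n0]
    by (intro nn_integral_catches_up_eventually_le[OF wU P_sub P_fresh meas]) (simp_all add: n0_def)
  also have "(\<integral>\<^sup>+\<omega>. \<Gamma> (wait_times P \<omega>) * ennreal (exp (\<alpha> * (\<delta> (wait_times P \<omega>) - lag w (wait_times P \<omega>)))) \<partial>M)
      = (\<integral>\<^sup>+\<omega>. ennreal (exp (- \<alpha> * lag w (\<lambda>a. wait_time a \<omega>))) \<partial>M)"
    by (intro nn_integral_cong)
      (simp add: \<Gamma>_def lag_eq ennreal_mult''[symmetric] exp_add[symmetric] algebra_simps)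
  also have "\<dots> = (\<Prod>l<length w. partial_laplace (w ! l))"
    by (rule nn_integral_exp_lag[OF w])
  finally show ?thesis .
qed

lemma AE_finite_catches_root:
  assumes L: "\<And>n. (\<Prod>m\<in>{K<..n}. gap_mgf m) \<le> L" "L < \<infinity>"
    and laplace: "(\<Sum>j. partial_laplace (Suc j)) < 1"
  shows "AE \<omega> in M. finite {w \<in> UH_nonroot. catches_root w \<omega>}"
proof (rule AE_finite_if_weighted_count_finite[OF countable_UH_nonroot])
  let ?e = "\<lambda>\<omega>. ennreal (exp (- \<alpha> * (\<Sum>m\<in>{1..K}. wait_time [m] \<omega>)))"
  show "?e \<in> borel_measurable M" "?e \<omega> \<noteq> 0" for \<omega>
    by simp_all
  have "(\<integral>\<^sup>+w. \<integral>\<^sup>+\<omega>. ?e \<omega> * of_bool (catches_root w \<omega>) \<partial>M \<partial>count_space UH_nonroot)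
      \<le> (\<integral>\<^sup>+w. L * (\<Prod>l<length w. partial_laplace (w ! l)) \<partial>count_space UH_nonroot)"
    by (intro nn_integral_mono catches_root_weighted_le L(1)) simp
  also have "\<dots> = L * (\<integral>\<^sup>+w. (\<Prod>l<length w. partial_laplace (w ! l)) \<partial>count_space UH_nonroot)"
    by (rule nn_integral_cmult) simp
  also have "\<dots> < \<infinity>"
    using L(2) nn_integral_UH_nonroot_prod_finite[OF laplace] by (simp add: ennreal_mult_less_top)
  finally show "(\<integral>\<^sup>+w. \<integral>\<^sup>+\<omega>. ?e \<omega> * of_bool (catches_root w \<omega>) \<partial>M \<partial>count_space UH_nonroot) < \<infinity>" .
qed simp

definition birth_time :: "nat list \<Rightarrow> 'a \<Rightarrow> real" where
  "birth_time v \<omega> = (\<Sum>l<length v. \<Sum>j\<in>{1..v ! l}. wait_time (take l v @ [j]) \<omega>)"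

lemma birth_eq_birth_time:
  assumes "\<forall>a\<in>UH_nonroot. X a \<omega> = ennreal (wait_time a \<omega>)" and "v \<in> UH"
  shows "birth X v \<omega> = ennreal (birth_time v \<omega>)"
proof -
  have "birth X v \<omega> = (\<Sum>l<length v. \<Sum>j\<in>{1..v ! l}. ennreal (wait_time (take l v @ [j]) \<omega>))"
    unfolding birth_def using assms take_in_UH by (intro sum.cong refl) (auto simp: snoc_in_UH_nonroot)
  then show ?thesis
    by (simp add: birth_time_def sum_nonneg)
qed

lemma birth_time_snoc: "birth_time (v @ [x]) \<omega> = birth_time v \<omega> + (\<Sum>j\<in>{1..x}. wait_time (v @ [j]) \<omega>)"
proof -
  have "(\<Sum>l<length v. \<Sum>j\<in>{1..(v @ [x]) ! l}. wait_time (take l (v @ [x]) @ [j]) \<omega>) = birth_time v \<omega>"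
    unfolding birth_time_def by (intro sum.cong refl) (auto simp: nth_append)
  then show ?thesis
    unfolding birth_time_def by simp
qed

lemma birth_time_eq_lag:
  assumes "w \<noteq> []"
  shows "birth_time w \<omega> + (\<Sum>j\<in>{1..w ! 0}. wait_time (w @ [j]) \<omega>) = (\<Sum>j\<in>{1..w ! 0}. wait_time [j] \<omega>) + lag w (\<lambda>a. wait_time a \<omega>)"
proof -
  have "{..<length w} = insert 0 {1..<length w}"
    using assms by (auto simp: neq_Nil_conv)
  then show ?thesis
    unfolding birth_time_def lag_def by simp
qed

lemma birth_time_singleton: "birth_time [x] \<omega> = (\<Sum>j\<in>{1..x}. wait_time [j] \<omega>)"
  by (simp add: birth_time_def)

lemma birth_time_nonneg: "0 \<le> birth_time v \<omega>"
  unfolding birth_time_def by (intro sum_nonneg) auto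

lemma birth_le_iff_catches_root:
  assumes "w \<noteq> []"
  shows "birth_time (w @ [w ! 0 + j]) \<omega> \<le> birth_time [w ! 0 + j] \<omega> \<longleftrightarrow>
    lag w (\<lambda>a. wait_time a \<omega>) + (\<Sum>m\<in>{w!0<..w!0+j}. wait_time (w @ [m]) \<omega>) \<le> (\<Sum>m\<in>{w!0<..w!0+j}. wait_time [m] \<omega>)"
  using birth_time_eq_lag[OF assms, of \<omega>]
  unfolding birth_time_snoc birth_time_singleton sum_atLeastAtMost_split_greaterThanAtMost
  by linarith

lemma catchP_subset_catches_root:
  assumes fin: "\<forall>a\<in>UH_nonroot. X a \<omega> = ennreal (wait_time a \<omega>)"
  shows "catchP X \<omega> \<subseteq> insert [] {w \<in> UH_nonroot. catches_root w \<omega>}"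
proof
  fix w assume w: "w \<in> catchP X \<omega>"
  show "w \<in> insert [] {w \<in> UH_nonroot. catches_root w \<omega>}"
  proof (cases "w = []")
    case False
    have "w \<in> UH" and "catches_up X [] w \<omega>"
      using w False unfolding catchP_def by (auto elim!: allE[of _ 0])
    then obtain j where "1 \<le> j" and "birth X (w @ [w ! 0 + j]) \<omega> \<le> birth X [w ! 0 + j] \<omega>"
      using False by (auto simp: catches_up_def hd_conv_nth)
    moreover have "w @ [w ! 0 + j] \<in> UH" "[w ! 0 + j] \<in> UH"
      using \<open>w \<in> UH\<close> \<open>1 \<le> j\<close> by (auto simp: UH_def)
    ultimately have "birth_time (w @ [w ! 0 + j]) \<omega> \<le> birth_time [w ! 0 + j] \<omega>"
      by (simp add: birth_eq_birth_time[OF fin] birth_time_nonneg)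
    then have "catches_root w \<omega>"
      using \<open>1 \<le> j\<close> unfolding catches_root_def birth_le_iff_catches_root[OF False] by blast
    then show ?thesis
      using \<open>w \<in> UH\<close> False by (simp add: UH_nonroot_def)
  qed simp
qed

lemma partial_laplace_eq_eexp:
  "partial_laplace c = (\<integral>\<^sup>+\<omega>. eexp (- ereal \<alpha> * enn2ereal (\<Sum>i\<in>{1..c}. X [i] \<omega>)) \<partial>M)"
  unfolding partial_laplace_def
proof (rule nn_integral_cong_AE)
  show "AE \<omega> in M. ennreal (exp (- \<alpha> * (\<Sum>j\<in>{1..c}. wait_time [j] \<omega>)))
      = eexp (- ereal \<alpha> * enn2ereal (\<Sum>i\<in>{1..c}. X [i] \<omega>))"
    using AE_X_eq_wait_time
  proof eventually_elim
    fix \<omega> assume "\<forall>a\<in>UH_nonroot. X a \<omega> = ennreal (wait_time a \<omega>)"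
    then have "(\<Sum>i\<in>{1..c}. X [i] \<omega>) = ennreal (\<Sum>i\<in>{1..c}. wait_time [i] \<omega>)"
      by (simp add: sum_nonneg)
    then show "ennreal (exp (- \<alpha> * (\<Sum>j\<in>{1..c}. wait_time [j] \<omega>)))
        = eexp (- ereal \<alpha> * enn2ereal (\<Sum>i\<in>{1..c}. X [i] \<omega>))"
      by (simp add: enn2ereal_ennreal sum_nonneg)
  qed
qed

lemma gap_mgf_eq_eexp:
  assumes "1 \<le> i"
  shows "(\<integral>\<^sup>+p. eexp (ereal \<alpha> * (enn2ereal (snd p) - enn2ereal (fst p)))
      \<partial>(distr M borel (X [i]) \<Otimes>\<^sub>M distr M borel (X [i]))) = gap_mgf i"
proof -
  interpret law: prob_space "law i" by (rule prob_space_law)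
  have "distr M borel (X [i]) = distr M borel (\<lambda>\<omega>. ennreal (wait_time [i] \<omega>))"
    using AE_X_eq_wait_time assms X_measurable[of "[i]"]
    by (intro distr_cong_AE) (auto elim!: eventually_mono)
  also have "\<dots> = distr (law i) borel ennreal"
    unfolding law_def by (subst distr_distr) (auto simp: comp_def)
  finally have "distr M borel (X [i]) \<Otimes>\<^sub>M distr M borel (X [i])
      = distr (law i \<Otimes>\<^sub>M law i) (borel \<Otimes>\<^sub>M borel) (\<lambda>(x, y). (ennreal x, ennreal y))"
    by (simp add: pair_measure_distr prob_space_imp_sigma_finite law.prob_space_distr)
  then show ?thesis
    unfolding gap_mgf_def
    by (simp add: nn_integral_distr case_prod_beta enn2ereal_ennreal_max del: ereal_max)
qed

lemma prod_gap_mgf_le_limit: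
  assumes "(\<lambda>n. \<Prod>i\<in>{K<..n}. gap_mgf i) \<longlonglongrightarrow> L"
  shows "(\<Prod>i\<in>{K<..n}. gap_mgf i) \<le> L"
proof (rule incseq_le[OF _ assms])
  show "incseq (\<lambda>n. \<Prod>i\<in>{K<..n}. gap_mgf i)"
    by (intro monoI prod_gap_mgf_mono) auto
qed

end

theorem lemma3p9:
  fixes M :: "'a measure" and X :: "nat list \<Rightarrow> 'a \<Rightarrow> ennreal"
    and \<alpha> :: real and K :: nat
  assumes M: "prob_space M"
    and meas: "\<And>u j. u \<in> UH \<Longrightarrow> 1 \<le> j \<Longrightarrow> X (u @ [j]) \<in> borel_measurable M"
    and indep_nodes: "prob_space.indep_vars M (\<lambda>_. PiM UNIV (\<lambda>_. borel))
                        (\<lambda>u \<omega> j. X (u @ [Suc j]) \<omega>) UH"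
    and copies: "\<And>u. u \<in> UH \<Longrightarrow>
        distr M (PiM UNIV (\<lambda>_. borel)) (\<lambda>\<omega> j. X (u @ [Suc j]) \<omega>)
      = distr M (PiM UNIV (\<lambda>_. borel)) (\<lambda>\<omega> j. X [Suc j] \<omega>)"
    and A1: "prob_space.indep_vars M (\<lambda>_. borel) (\<lambda>i. X [i]) {1..}"
    and A2: "\<And>j. 1 \<le> j \<Longrightarrow> AE \<omega> in M. X [j] \<omega> < \<infinity>"
    and A3: "(\<Sum>j. \<Prod>i\<in>{1..Suc j}. emeasure M {\<omega> \<in> space M. X [i] \<omega> = 0}) < 1"
    and alpha: "\<alpha> > 0" and K: "1 \<le> K"
    and laplace: "(\<Sum>j. \<integral>\<^sup>+ \<omega>. eexp (- ereal \<alpha> * enn2ereal (\<Sum>i\<in>{1..Suc j}. X [i] \<omega>)) \<partial>M) < 1"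
    and prodfin: "\<exists>L. L < \<infinity> \<and>
        (\<lambda>n. \<Prod>i\<in>{K+1..n}.
            \<integral>\<^sup>+ p. eexp (ereal \<alpha> * (enn2ereal (snd p) - enn2ereal (fst p)))
              \<partial>(distr M borel (X [i]) \<Otimes>\<^sub>M distr M borel (X [i])))
        \<longlonglongrightarrow> L"
  shows "AE \<omega> in M. finite (catchP X \<omega>)"
proof -
  have "cmj_tree M X \<alpha>"
    using M alpha indep_nodes copies A1 A2 by (simp add: cmj_tree_def cmj_tree_axioms_def)
  then interpret cmj_tree M X \<alpha> .
  have "(\<Sum>j. partial_laplace (Suc j)) < 1"
    using laplace by (simp add: partial_laplace_eq_eexp)
  moreover have "(\<lambda>n. \<Prod>i\<in>{K+1..n}. \<integral>\<^sup>+ p. eexp (ereal \<alpha> * (enn2ereal (snd p) - enn2ereal (fst p)))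
      \<partial>(distr M borel (X [i]) \<Otimes>\<^sub>M distr M borel (X [i]))) = (\<lambda>n. \<Prod>i\<in>{K<..n}. gap_mgf i)"
    by (intro ext prod.cong) (auto simp: gap_mgf_eq_eexp)
  with prodfin obtain L where "L < \<infinity>" and "(\<lambda>n. \<Prod>i\<in>{K<..n}. gap_mgf i) \<longlonglongrightarrow> L"
    by auto
  ultimately have "AE \<omega> in M. finite {w \<in> UH_nonroot. catches_root w \<omega>}"
    by (intro AE_finite_catches_root prod_gap_mgf_le_limit)
  with AE_X_eq_wait_time show ?thesis
    by eventually_elim (metis catchP_subset_catches_root finite_insert finite_subset)
qed

end
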